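(* Assume the Setting and consider Algorithm 1 with noisy data $y^\delta$ ($\|y^\delta-y\|\le\delta$, $\delta>0$) and arbitrary admissible parameters. Let $\hat x$ be any solution of $F(x)=y$ with $\hat x\in B_{2\rho}(x_0)$. Let $k\ge 0$ be an integer such that the iterates $x_0^\delta,\dots,x_k^\delta$ are defined by Algorithm 1 and $x_n^\delta\in B_{2\rho}(x_0)$ for all $0\le n<k$. Define $\gamma_n^\delta:=\langle m_n^\delta, x_n^\delta-\hat x\rangle$ for $0\le n\le k$. Then $\gamma_n^\delta\le\tilde\gamma_n^\delta$ for all $0\le n\le k$.
   Context: Setting. Let $X,Y$ be real Hilbert spaces. Let $\mathcal R:X\to(-\infty,\infty]$ be proper, lower semicontinuous and strongly convex with constant $\sigma>0$, i.e. $\mathcal R(t\bar x+(1-t)x)+\sigma t(1-t)\|\bar x-x\|^2\le t\mathcal R(\bar x)+(1-t)\mathcal R(x)$ for all $\bar x,x\in\mathrm{dom}(\mathcal R)$ and $t\in[0,1]$. For $\xi\in\partial\mathcal R(x)$ (subdifferential) the Bregman distance is $D_{\mathcal R}^{\xi}(z,x)=\mathcal R(z)-\mathcal R(x)-\langle\xi,z-x\rangle$. The convex conjugate $\mathcal R^*$ is differentiable with $\|\nabla\mathcal R^*(\bar\xi)-\nabla\mathcal R^*(\xi)\|\le\|\bar\xi-\xi\|/(2\sigma)$, and $\nabla\mathcal R^*(\xi)=\arg\min_{x\in X}\{\mathcal R(x)-\langle\xi,x\rangle\}$ (unique minimizer), with $\xi\in\partial\mathcal R(\nabla\mathcal R^*(\xi))$.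 Let $F:\mathrm{dom}(F)\subset X\to Y$ and $y\in Y$. Assume: (b) there are $\rho>0$, $x_0\in X$, $\xi_0\in\partial\mathcal R(x_0)$ with $B_{2\rho}(x_0):=\{x:\|x-x_0\|\le 2\rho\}\subset\mathrm{dom}(F)$, and $F(x)=y$ has a solution $\bar x$ with $D_{\mathcal R}^{\xi_0}(\bar x,x_0)\le\sigma\rho^2$; (c) $F$ is weakly closed: if $x_n\in\mathrm{dom}(F)$, $x_n\rightharpoonup x$ and $F(x_n)\to v$, then $x\in\mathrm{dom}(F)$ and $F(x)=v$; (d) there are bounded linear operators $L(x):X\to Y$, $x\in B_{2\rho}(x_0)$, with $x\mapsto L(x)$ continuous on $B_{2\rho}(x_0)$, a constant $\eta\in[0,1)$ with $\|F(x)-F(\bar x)-L(\bar x)(x-\bar x)\|\le\eta\|F(x)-F(\bar x)\|$ for all $x,\bar x\in B_{2\rho}(x_0)$, and a constant $L>0$ with $\|L(x)\|\le L$ on $B_{2\rho}(x_0)$. Algorithm 1 (noisy data $y^\delta$ with $\|y^\delta-y\|\le\delta$, $\delta>0$). Parameters: $\tau>1$, $\beta\in(0,\infty]$, $\mu_0>0$, $\mu_1>0$, and a fixed choice of one of two step-size rules: (constant) $\alpha_n^\delta=\mu_0/L^2$, or (adaptive) $\alpha_n^\delta=\min\{\mu_0\|r_n^\delta\|^2/\|g_n^\delta\|^2,\mu_1\}$ (with $\mu_0\|r_n^\delta\|^2/\|g_n^\delta\|^2:=+\infty$ if $g_n^\delta=0$). Set $\xi_{-1}^\delta=\xi_0^\delta=\xi_0$,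 $x_0^\delta=x_0=\nabla\mathcal R^*(\xi_0)$. For $n\ge0$: (i) $r_n^\delta:=F(x_n^\delta)-y^\delta$; if $\|r_n^\delta\|\le\tau\delta$, stop and output $x_n^\delta$ (the stopping index is denoted $n_\delta$). (ii) $g_n^\delta:=L(x_n^\delta)^*r_n^\delta$ and $\alpha_n^\delta$ by the chosen rule. (iii) $m_n^\delta:=\xi_n^\delta-\xi_{n-1}^\delta$; $\tilde\gamma_0^\delta:=0$ and for $n\ge1$, $\tilde\gamma_n^\delta:=\langle m_n^\delta,x_n^\delta-x_{n-1}^\delta\rangle-(1-\eta)\alpha_{n-1}^\delta\|r_{n-1}^\delta\|^2+(1+\eta)\alpha_{n-1}^\delta\delta\|r_{n-1}^\delta\|+\beta_{n-1}^\delta\tilde\gamma_{n-1}^\delta$. (iv) $\beta_n^\delta:=\min\{\max\{0,(\alpha_n^\delta\langle g_n^\delta,m_n^\delta\rangle-2\sigma\tilde\gamma_n^\delta)/\|m_n^\delta\|^2\},\beta\}$ if $m_n^\delta\ne0$, and $\beta_n^\delta:=0$ if $m_n^\delta=0$. (v) $\xi_{n+1}^\delta:=\xi_n^\delta-\alpha_n^\delta g_n^\delta+\beta_n^\delta m_n^\delta$, $x_{n+1}^\delta:=\nabla\mathcal R^*(\xi_{n+1}^\delta)$. *)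

theory Defs
  imports "HOL-Analysis.Analysis" "HOL-Library.Extended_Real"
begin

definition edom :: "('a \<Rightarrow> ereal) \<Rightarrow> 'a set" where
  "edom R = {x. R x < \<infinity>}"

definition proper_fun :: "('a \<Rightarrow> ereal) \<Rightarrow> bool" where
  "proper_fun R \<longleftrightarrow> (\<forall>x. R x \<noteq> -\<infinity>) \<and> edom R \<noteq> {}"

definition lsc_fun :: "('a::metric_space \<Rightarrow> ereal) \<Rightarrow> bool" where
  "lsc_fun R \<longleftrightarrow> (\<forall>x X. X \<longlonglongrightarrow> x \<longrightarrow> R x \<le> liminf (\<lambda>n. R (X n)))"

definition strongly_convex :: "real \<Rightarrow> ('a::real_normed_vector \<Rightarrow> ereal) \<Rightarrow> bool" where
  "strongly_convex \<sigma> R \<longleftrightarrow>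
     (\<forall>xb\<in>edom R. \<forall>x\<in>edom R. \<forall>t\<in>{0..1::real}.
        R (t *\<^sub>R xb + (1 - t) *\<^sub>R x) + ereal (\<sigma> * t * (1 - t) * (norm (xb - x))\<^sup>2)
          \<le> ereal t * R xb + ereal (1 - t) * R x)"

definition subdiff :: "('a::real_inner \<Rightarrow> ereal) \<Rightarrow> 'a \<Rightarrow> 'a set" where
  "subdiff R x = {\<xi>. R x < \<infinity> \<and> (\<forall>z. R x + ereal (\<xi> \<bullet> (z - x)) \<le> R z)}"

definition bregman :: "('a::real_inner \<Rightarrow> ereal) \<Rightarrow> 'a \<Rightarrow> 'a \<Rightarrow> 'a \<Rightarrow> ereal" where
  "bregman R \<xi> z x = R z - R x - ereal (\<xi> \<bullet> (z - x))"

text \<open>Gradient of the convex conjugate: the unique minimizer of R x - <xi,x>.\<close>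
definition gradconj :: "('a::real_inner \<Rightarrow> ereal) \<Rightarrow> 'a \<Rightarrow> 'a" where
  "gradconj R \<xi> = (THE x. \<forall>z. R x - ereal (\<xi> \<bullet> x) \<le> R z - ereal (\<xi> \<bullet> z))"

definition weakly_converges :: "(nat \<Rightarrow> 'a::real_inner) \<Rightarrow> 'a \<Rightarrow> bool" where
  "weakly_converges X x \<longleftrightarrow> (\<forall>v. (\<lambda>n. X n \<bullet> v) \<longlonglongrightarrow> x \<bullet> v)"

definition alpha_rule :: "bool \<Rightarrow> real \<Rightarrow> real \<Rightarrow> real \<Rightarrow> 'b::real_normed_vector \<Rightarrow> 'a::real_normed_vector \<Rightarrow> real" where
  "alpha_rule adaptive \<mu>0 \<mu>1 Lc r g =
     (if adaptive then (if g = 0 then \<mu>1 else min (\<mu>0 * (norm r)\<^sup>2 / (norm g)\<^sup>2) \<mu>1)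
      else \<mu>0 / Lc\<^sup>2)"

text \<open>Momentum coefficient; beta in (0, infinity] is an extended real.\<close>
definition beta_rule :: "ereal \<Rightarrow> real \<Rightarrow> real \<Rightarrow> 'a::real_inner \<Rightarrow> 'a \<Rightarrow> real \<Rightarrow> real" where
  "beta_rule \<beta> \<sigma> \<alpha> g m gt =
     (if m = 0 then 0
      else real_of_ereal (min (ereal (max 0 ((\<alpha> * (g \<bullet> m) - 2 * \<sigma> * gt) / (norm m)\<^sup>2))) \<beta>))"

text \<open>Algorithm 1. The state at step n is (xi_n, xi_{n-1}, gamma-tilde_n), with xi_{-1} = xi_0.
  Arguments: R F Lstar (adjoint of L(x)) y_delta delta eta sigma L beta mu0 mu1 adaptive xi0.\<close>
fun alg :: "('a::real_inner \<Rightarrow> ereal) \<Rightarrow> ('a \<Rightarrow> 'b::real_inner) \<Rightarrow> ('a \<Rightarrow> 'b \<Rightarrow> 'a) \<Rightarrow> 'b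
            \<Rightarrow> real \<Rightarrow> real \<Rightarrow> real \<Rightarrow> real \<Rightarrow> ereal \<Rightarrow> real \<Rightarrow> real \<Rightarrow> bool \<Rightarrow> 'a
            \<Rightarrow> nat \<Rightarrow> 'a \<times> 'a \<times> real" where
  "alg R F Lstar yd \<delta> \<eta> \<sigma> Lc \<beta> \<mu>0 \<mu>1 adaptive \<xi>0 0 = (\<xi>0, \<xi>0, 0)"
| "alg R F Lstar yd \<delta> \<eta> \<sigma> Lc \<beta> \<mu>0 \<mu>1 adaptive \<xi>0 (Suc n) =
     (case alg R F Lstar yd \<delta> \<eta> \<sigma> Lc \<beta> \<mu>0 \<mu>1 adaptive \<xi>0 n of (\<xi>, \<xi>p, gt) \<Rightarrow>
       (let x = gradconj R \<xi>;
            r = F x - yd;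
            g = Lstar x r;
            a = alpha_rule adaptive \<mu>0 \<mu>1 Lc r g;
            m = \<xi> - \<xi>p;
            b = beta_rule \<beta> \<sigma> a g m gt;
            \<xi>' = \<xi> - a *\<^sub>R g + b *\<^sub>R m;
            x' = gradconj R \<xi>';
            gt' = (\<xi>' - \<xi>) \<bullet> (x' - x) - (1 - \<eta>) * a * (norm r)\<^sup>2
                  + (1 + \<eta>) * a * \<delta> * norm r + b * gt
        in (\<xi>', \<xi>, gt')))"

end

theory Submission
  imports Defs
begin

text \<open>Writing the update as
  \<open>\<xi>\<^sub>n\<^sub>+\<^sub>1 - \<xi>\<^sub>n = -\<alpha>\<^sub>n g\<^sub>n + \<beta>\<^sub>n m\<^sub>n\<close>, one splits
  \<open>\<gamma>\<^sub>n\<^sub>+\<^sub>1 = \<langle>m\<^sub>n\<^sub>+\<^sub>1, x\<^sub>n\<^sub>+\<^sub>1 - x\<^sub>n\<rangle> - \<alpha>\<^sub>n \<langle>g\<^sub>n, x\<^sub>n - x\<^sup>\<and>\<rangle> + \<beta>\<^sub>n \<gamma>\<^sub>n\<close>.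
  The tangential cone condition and the noise level bound \<open>\<langle>g\<^sub>n, x\<^sub>n - x\<^sup>\<and>\<rangle>\<close> from below
  by \<open>(1 - \<eta>)\<parallel>r\<^sub>n\<parallel>\<^sup>2 - (1 + \<eta>)\<delta>\<parallel>r\<^sub>n\<parallel>\<close>, and the induction hypothesis bounds \<open>\<gamma>\<^sub>n\<close> by
  \<open>\<gamma>\<^sup>~\<^sub>n\<close>; both estimates survive multiplication because step size and momentum
  coefficient are nonnegative.\<close>

lemma tangential_cone_residual_lower_bound:
  fixes F :: "'a::real_inner \<Rightarrow> 'b::real_inner" and Lx :: "'a \<Rightarrow>\<^sub>L 'b"
  assumes cone: "norm (F xh - F x - blinfun_apply Lx (xh - x)) \<le> \<eta> * norm (F xh - F x)"
    and adjoint: "\<And>u v. blinfun_apply Lx u \<bullet> v = u \<bullet> Lstar v"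
    and noise: "norm (yd - y) \<le> \<delta>" and solution: "F xh = y" and \<eta>_nonneg: "0 \<le> \<eta>"
  shows "(1 - \<eta>) * (norm (F x - yd))\<^sup>2 - (1 + \<eta>) * \<delta> * norm (F x - yd)
         \<le> Lstar (F x - yd) \<bullet> (x - xh)"
proof -
  define r where "r = F x - yd"
  define e where "e = F xh - F x - blinfun_apply Lx (xh - x)"
  have "norm (F x - y) \<le> norm r + \<delta>"
    unfolding r_def using norm_triangle_ineq[of "F x - yd" "yd - y"] noise by simp
  then have e_bound: "norm e \<le> \<eta> * (norm r + \<delta>)"
    using cone solution \<eta>_nonneg unfolding e_def
    by (metis mult_left_mono norm_minus_commute order_trans)
  have "blinfun_apply Lx (x - xh) = r + (yd - y) + e"
    unfolding r_def e_def using solution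
    by (simp add: blinfun.diff_right blinfun.minus_right[symmetric] algebra_simps)
  then have split: "Lstar r \<bullet> (x - xh) = (norm r)\<^sup>2 + (yd - y) \<bullet> r + e \<bullet> r"
    using adjoint[of "x - xh" r]
    by (simp add: inner_commute inner_add_right power2_norm_eq_inner)
  have "- (\<delta> * norm r) \<le> (yd - y) \<bullet> r"
    using Cauchy_Schwarz_ineq2[of "yd - y" r] mult_right_mono[OF noise norm_ge_zero[of r]]
    by (smt (verit) abs_le_iff)
  moreover have "- (\<eta> * (norm r + \<delta>) * norm r) \<le> e \<bullet> r"
    using Cauchy_Schwarz_ineq2[of e r] mult_right_mono[OF e_bound norm_ge_zero[of r]]
    by (smt (verit) abs_le_iff)
  ultimately show ?thesis
    using split unfolding r_def[symmetric] by (simp add: power2_eq_square algebra_simps)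
qed

lemma alpha_rule_nonneg: "\<mu>0 > 0 \<Longrightarrow> \<mu>1 > 0 \<Longrightarrow> 0 \<le> alpha_rule adaptive \<mu>0 \<mu>1 Lc r g"
  unfolding alpha_rule_def by (auto simp: min_def)

lemma beta_rule_nonneg: "\<beta> > 0 \<Longrightarrow> 0 \<le> beta_rule \<beta> \<sigma> a g m gt"
  unfolding beta_rule_def by (cases \<beta>) (auto simp: min_def max_def)

lemma momentum_step_inner_bound:
  fixes g m :: "'a::real_inner"
  assumes update: "\<xi>' = \<xi> - a *\<^sub>R g + b *\<^sub>R m"
    and a_nonneg: "0 \<le> a" and b_nonneg: "0 \<le> b"
    and gradient_bound: "c \<le> g \<bullet> (x - xh)" and momentum_bound: "m \<bullet> (x - xh) \<le> gt"
  shows "(\<xi>' - \<xi>) \<bullet> (x' - xh) \<le> (\<xi>' - \<xi>) \<bullet> (x' - x) - a * c + b * gt"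
proof -
  have "(\<xi>' - \<xi>) \<bullet> (x' - xh) = (\<xi>' - \<xi>) \<bullet> (x' - x) - a * (g \<bullet> (x - xh)) + b * (m \<bullet> (x - xh))"
    unfolding update by (simp add: inner_diff_right inner_add_left inner_diff_left algebra_simps)
  moreover have "a * c \<le> a * (g \<bullet> (x - xh))" using mult_left_mono[OF gradient_bound a_nonneg] .
  moreover have "b * (m \<bullet> (x - xh)) \<le> b * gt" using mult_left_mono[OF momentum_bound b_nonneg] .
  ultimately show ?thesis by linarith
qed

lemma alg_momentum_inner_le_gamma_tilde:
  fixes F :: "'a::real_inner \<Rightarrow> 'b::real_inner" and L :: "'a \<Rightarrow> ('a \<Rightarrow>\<^sub>L 'b)"
  assumes cone: "\<And>x. x \<in> S \<Longrightarrow>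
                   norm (F xh - F x - blinfun_apply (L x) (xh - x)) \<le> \<eta> * norm (F xh - F x)"
    and adjoint: "\<And>x u v. x \<in> S \<Longrightarrow> blinfun_apply (L x) u \<bullet> v = u \<bullet> Lstar x v"
    and noise: "norm (yd - y) \<le> \<delta>" and solution: "F xh = y" and \<eta>_nonneg: "0 \<le> \<eta>"
    and \<beta>_pos: "\<beta> > 0" and \<mu>0_pos: "\<mu>0 > 0" and \<mu>1_pos: "\<mu>1 > 0"
    and iterates_in_S: "\<And>n. n < k \<Longrightarrow>
          gradconj R (fst (alg R F Lstar yd \<delta> \<eta> \<sigma> Lc \<beta> \<mu>0 \<mu>1 adaptive \<xi>0 n)) \<in> S"
    and "n \<le> k"
  shows "case alg R F Lstar yd \<delta> \<eta> \<sigma> Lc \<beta> \<mu>0 \<mu>1 adaptive \<xi>0 n of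
           (\<xi>, \<xi>p, gt) \<Rightarrow> (\<xi> - \<xi>p) \<bullet> (gradconj R \<xi> - xh) \<le> gt"
  using \<open>n \<le> k\<close>
proof (induction n)
  case 0
  then show ?case by simp
next
  case (Suc n)
  obtain \<xi> \<xi>p gt where state: "alg R F Lstar yd \<delta> \<eta> \<sigma> Lc \<beta> \<mu>0 \<mu>1 adaptive \<xi>0 n = (\<xi>, \<xi>p, gt)"
    by (metis prod_cases3)
  define x where "x = gradconj R \<xi>"
  define r where "r = F x - yd"
  define g where "g = Lstar x r"
  define a where "a = alpha_rule adaptive \<mu>0 \<mu>1 Lc r g"
  define m where "m = \<xi> - \<xi>p"
  define b where "b = beta_rule \<beta> \<sigma> a g m gt"
  define \<xi>' where "\<xi>' = \<xi> - a *\<^sub>R g + b *\<^sub>R m"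
  define c where "c = (1 - \<eta>) * (norm r)\<^sup>2 - (1 + \<eta>) * \<delta> * norm r"
  have "x \<in> S" using iterates_in_S[of n] Suc.prems state by (simp add: x_def)
  have "0 \<le> a" unfolding a_def using \<mu>0_pos \<mu>1_pos by (rule alpha_rule_nonneg)
  moreover have "0 \<le> b" unfolding b_def using \<beta>_pos by (rule beta_rule_nonneg)
  moreover have "c \<le> g \<bullet> (x - xh)"
    unfolding c_def g_def r_def using \<open>x \<in> S\<close>
    by (intro tangential_cone_residual_lower_bound[where Lx = "L x" and y = y]
        cone adjoint noise solution \<eta>_nonneg)
  moreover have "m \<bullet> (x - xh) \<le> gt" using Suc state by (simp add: m_def x_def)
  ultimately have "(\<xi>' - \<xi>) \<bullet> (gradconj R \<xi>' - xh)
      \<le> (\<xi>' - \<xi>) \<bullet> (gradconj R \<xi>' - x) - a * c + b * gt"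
    by (rule momentum_step_inner_bound[OF \<xi>'_def])
  moreover have "alg R F Lstar yd \<delta> \<eta> \<sigma> Lc \<beta> \<mu>0 \<mu>1 adaptive \<xi>0 (Suc n)
      = (\<xi>', \<xi>, (\<xi>' - \<xi>) \<bullet> (gradconj R \<xi>' - x) - a * c + b * gt)"
    by (simp add: state Let_def x_def r_def g_def a_def m_def b_def c_def \<xi>'_def right_diff_distrib)
  ultimately show ?case by simp
qed

theorem mainTheorem1:
  fixes R :: "'a::{real_inner,complete_space} \<Rightarrow> ereal"
    and F :: "'a \<Rightarrow> 'b::{real_inner,complete_space}"
    and DF :: "'a set"
    and L :: "'a \<Rightarrow> ('a \<Rightarrow>\<^sub>L 'b)"
    and Lstar :: "'a \<Rightarrow> 'b \<Rightarrow> 'a"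
    and y yd :: 'b
    and x0 \<xi>0 xbar xhat :: 'a
    and \<sigma> \<rho> \<eta> Lc \<delta> \<tau> \<mu>0 \<mu>1 :: real
    and \<beta> :: ereal
    and adaptive :: bool
    and k :: nat
  assumes R_proper: "proper_fun R"
    and R_lsc: "lsc_fun R"
    and \<sigma>_pos: "\<sigma> > 0"
    and R_sc: "strongly_convex \<sigma> R"
    and \<rho>_pos: "\<rho> > 0"
    and \<xi>0_sub: "\<xi>0 \<in> subdiff R x0"
    and ball_dom: "cball x0 (2 * \<rho>) \<subseteq> DF"
    and xbar_dom: "xbar \<in> DF"
    and xbar_sol: "F xbar = y"
    and xbar_breg: "bregman R \<xi>0 xbar x0 \<le> ereal (\<sigma> * \<rho>\<^sup>2)"
    and F_wclosed: "\<And>X x v. (\<forall>n. X n \<in> DF) \<Longrightarrow> weakly_converges X x \<Longrightarrow>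
                        (\<lambda>n. F (X n)) \<longlonglongrightarrow> v \<Longrightarrow> x \<in> DF \<and> F x = v"
    and L_cont: "continuous_on (cball x0 (2 * \<rho>)) L"
    and \<eta>_range: "0 \<le> \<eta>" "\<eta> < 1"
    and tcc: "\<And>x x'. x \<in> cball x0 (2 * \<rho>) \<Longrightarrow> x' \<in> cball x0 (2 * \<rho>) \<Longrightarrow>
                 norm (F x - F x' - blinfun_apply (L x') (x - x')) \<le> \<eta> * norm (F x - F x')"
    and Lc_pos: "Lc > 0"
    and L_bound: "\<And>x. x \<in> cball x0 (2 * \<rho>) \<Longrightarrow> norm (L x) \<le> Lc"
    and Lstar_adj: "\<And>x u v. x \<in> cball x0 (2 * \<rho>) \<Longrightarrow>
                       blinfun_apply (L x) u \<bullet> v = u \<bullet> Lstar x v"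
    and \<delta>_pos: "\<delta> > 0"
    and noise: "norm (yd - y) \<le> \<delta>"
    and \<tau>_gt: "\<tau> > 1"
    and \<beta>_pos: "\<beta> > 0"
    and \<mu>0_pos: "\<mu>0 > 0"
    and \<mu>1_pos: "\<mu>1 > 0"
    and xhat_sol: "F xhat = y"
    and xhat_ball: "xhat \<in> cball x0 (2 * \<rho>)"
    and not_stopped: "\<forall>n<k. case alg R F Lstar yd \<delta> \<eta> \<sigma> Lc \<beta> \<mu>0 \<mu>1 adaptive \<xi>0 n of
                         (\<xi>, \<xi>p, gt) \<Rightarrow> norm (F (gradconj R \<xi>) - yd) > \<tau> * \<delta>"
    and in_ball: "\<forall>n<k. case alg R F Lstar yd \<delta> \<eta> \<sigma> Lc \<beta> \<mu>0 \<mu>1 adaptive \<xi>0 n of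
                         (\<xi>, \<xi>p, gt) \<Rightarrow> gradconj R \<xi> \<in> cball x0 (2 * \<rho>)"
  shows "\<forall>n\<le>k. case alg R F Lstar yd \<delta> \<eta> \<sigma> Lc \<beta> \<mu>0 \<mu>1 adaptive \<xi>0 n of
            (\<xi>, \<xi>p, gt) \<Rightarrow> (\<xi> - \<xi>p) \<bullet> (gradconj R \<xi> - xhat) \<le> gt"
proof (intro allI impI)
  fix n assume "n \<le> k"
  have iterates_in_ball: "gradconj R (fst (alg R F Lstar yd \<delta> \<eta> \<sigma> Lc \<beta> \<mu>0 \<mu>1 adaptive \<xi>0 j))
      \<in> cball x0 (2 * \<rho>)" if "j < k" for j
    using in_ball that by (simp add: case_prod_beta)
  show "case alg R F Lstar yd \<delta> \<eta> \<sigma> Lc \<beta> \<mu>0 \<mu>1 adaptive \<xi>0 n of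
            (\<xi>, \<xi>p, gt) \<Rightarrow> (\<xi> - \<xi>p) \<bullet> (gradconj R \<xi> - xhat) \<le> gt"
    by (rule alg_momentum_inner_le_gamma_tilde[OF tcc[OF xhat_ball] Lstar_adj noise xhat_sol
        \<eta>_range(1) \<beta>_pos \<mu>0_pos \<mu>1_pos iterates_in_ball \<open>n \<le> k\<close>])
qed

end
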